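(* Let $N\ge 1$ and $1\le K\le N$ be integers. A behavior $P\in\mathcal{L}_N$ is a vertex of the polytope $\mathcal{C}_{N,K}$ if and only if there is a $K$-junta $f:\{0,1\}^N\to\{0,1\}$ such that $P(a|\mathbf{x})=\delta_{a,f(\mathbf{x})}$ for all $a\in\{0,1\}$ and $\mathbf{x}\in\{0,1\}^N$. In particular, the vertices of $\mathcal{C}_{N,K}$ are in one-to-one correspondence with the $K$-juntas on $N$ variables, and their number is $$|V(\mathcal{C}_{N,K})|=\sum_{k=0}^K\binom{N}{k}\sum_{r=0}^k(-1)^{k-r}\binom{k}{r}2^{2^r}.$$
   Context: A behavior on $N$ input bits is a family $P=(P(a|\mathbf{x}))_{a\in\{0,1\},\mathbf{x}\in\{0,1\}^N}$ of real numbers with $P(a|\mathbf{x})\ge 0$ and $P(0|\mathbf{x})+P(1|\mathbf{x})=1$ for every $\mathbf{x}$; the set of all behaviors is $\mathcal{L}_N\subset\mathbb{R}^{2^{N+1}}$. $\mathcal{C}_{N,K}$ is the set of behaviors $P\in\mathcal{L}_N$ for which there exist non-negative weights $q_{j_1\cdots j_K}$ summing to one, indexed by $K$-tuples of pairwise distinct indices $j_1,\dots,j_K\in\{1,\dots,N\}$, and conditional probability distributions $P(a|x_{j_1}\cdots x_{j_K})$ on $a\in\{0,1\}$ depending only on the bits $x_{j_1},\dots,x_{j_K}$, such that $P(a|\mathbf{x})=\sum_{j_1,\dots,j_K}q_{j_1\cdots j_K}P(a|x_{j_1}\cdots x_{j_K})$ for all $a,\mathbf{x}$. It is a convex polytope.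 A Boolean function $f:\{0,1\}^N\to\{0,1\}$ is a $K$-junta if there is a subset $\{j_1,\dots,j_{N-K}\}\subseteq\{1,\dots,N\}$ of $N-K$ indices such that $f$ does not depend on $x_{j_k}$ for $k=1,\dots,N-K$ (i.e. $f$ depends on at most $K$ of its variables). *)

theory Defs
  imports Complex_Main
begin

text \<open>Inputs: bit strings x in {0,1}^N, represented as functions nat => bool
  with bits x 0, ..., x (N-1) (False = 0, True = 1) and all other values False.
  Outputs a in {0,1} are represented as bool.\<close>

definition inputs :: "nat \<Rightarrow> (nat \<Rightarrow> bool) set" where
  "inputs N = {x. \<forall>i. N \<le> i \<longrightarrow> x i = False}"

text \<open>A point of R^(2^(N+1)): a real family indexed by (a, x), a in {0,1}, x in {0,1}^N,
  represented as a function that is zero outside the index set.\<close>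

definition points :: "nat \<Rightarrow> (bool \<Rightarrow> (nat \<Rightarrow> bool) \<Rightarrow> real) set" where
  "points N = {P. \<forall>a x. x \<notin> inputs N \<longrightarrow> P a x = 0}"

definition behaviors :: "nat \<Rightarrow> (bool \<Rightarrow> (nat \<Rightarrow> bool) \<Rightarrow> real) set" where
  "behaviors N = {P \<in> points N.
      (\<forall>a. \<forall>x\<in>inputs N. 0 \<le> P a x) \<and> (\<forall>x\<in>inputs N. P False x + P True x = 1)}"

definition tuples :: "nat \<Rightarrow> nat \<Rightarrow> nat list set" where
  "tuples N K = {js. length js = K \<and> distinct js \<and> set js \<subseteq> {..<N}}"

text \<open>The polytope C_{N,K}. For each tuple js, D js is a conditional distribution
  P(a | x_{j1} ... x_{jK}), i.e. a function of a and the K-bit string (map x js).\<close>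

definition C_poly :: "nat \<Rightarrow> nat \<Rightarrow> (bool \<Rightarrow> (nat \<Rightarrow> bool) \<Rightarrow> real) set" where
  "C_poly N K = {P \<in> behaviors N. \<exists>(q :: nat list \<Rightarrow> real) (D :: nat list \<Rightarrow> bool \<Rightarrow> bool list \<Rightarrow> real).
      (\<forall>js\<in>tuples N K. 0 \<le> q js) \<and> (\<Sum>js\<in>tuples N K. q js) = 1 \<and>
      (\<forall>js\<in>tuples N K. \<forall>y. length y = K \<longrightarrow>
          (\<forall>a. 0 \<le> D js a y) \<and> D js False y + D js True y = 1) \<and>
      (\<forall>a. \<forall>x\<in>inputs N. P a x = (\<Sum>js\<in>tuples N K. q js * D js a (map x js)))}"

text \<open>Vertices (extreme points) of a set S of such points: P is in S and is not in the
  open segment between two distinct points of S (literal unfolding of extreme_point_of).\<close>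

definition vertex_of :: "(bool \<Rightarrow> (nat \<Rightarrow> bool) \<Rightarrow> real) \<Rightarrow> (bool \<Rightarrow> (nat \<Rightarrow> bool) \<Rightarrow> real) set \<Rightarrow> bool" where
  "vertex_of P S \<longleftrightarrow> P \<in> S \<and>
     (\<forall>Q\<in>S. \<forall>R\<in>S. \<forall>u::real. Q \<noteq> R \<and> 0 < u \<and> u < 1 \<longrightarrow>
        P \<noteq> (\<lambda>a x. (1 - u) * Q a x + u * R a x))"

definition is_junta :: "nat \<Rightarrow> nat \<Rightarrow> ((nat \<Rightarrow> bool) \<Rightarrow> bool) \<Rightarrow> bool" where
  "is_junta N K f \<longleftrightarrow> (\<exists>J. J \<subseteq> {..<N} \<and> card J = N - K \<and>
      (\<forall>j\<in>J. \<forall>x\<in>inputs N. f (x(j := \<not> x j)) = f x))"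

text \<open>Boolean functions on {0,1}^N, normalized to False outside {0,1}^N so that
  distinct elements represent distinct functions.\<close>

definition juntas :: "nat \<Rightarrow> nat \<Rightarrow> ((nat \<Rightarrow> bool) \<Rightarrow> bool) set" where
  "juntas N K = {f. is_junta N K f \<and> (\<forall>x. x \<notin> inputs N \<longrightarrow> f x = False)}"

definition det_behavior :: "nat \<Rightarrow> ((nat \<Rightarrow> bool) \<Rightarrow> bool) \<Rightarrow> bool \<Rightarrow> (nat \<Rightarrow> bool) \<Rightarrow> real" where
  "det_behavior N f = (\<lambda>a x. if x \<in> inputs N then (if a = f x then 1 else 0) else 0)"

end

theory Submission
  imports Defs "HOL-Library.FuncSet"
begin

text \<open>
  Every behavior in \<open>C_poly N K\<close> is a convex combination of local behaviors
  \<open>P(a|x) = d a (map x js)\<close>, one for each \<open>K\<close>-tuple \<open>js\<close> of coordinates. A vertex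
  equals every summand of positive weight, being a proper convex combination of that summand
  and the renormalized rest. A local behavior with a row \<open>0 < d True y < 1\<close> is the proper
  convex combination of the two local behaviors obtained by making that row deterministic.
  Hence a vertex is \<open>P(a|x) = (if a = f x then 1 else 0)\<close> for some \<open>f\<close> that depends only
  on the coordinates in \<open>js\<close>, i.e. a \<open>K\<close>-junta. Conversely these behaviors lie in
  \<open>C_poly N K\<close> and, taking only the values 0 and 1, are extreme even among all behaviors.

  The functions whose relevant variables lie in a set \<open>S\<close> are determined by their values on
  the \<open>2 ^ card S\<close> inputs supported in \<open>S\<close>, so there are \<open>2 ^ 2 ^ card S\<close> of them;
  Moebius inversion over the subsets of \<open>S\<close> counts those whose relevant variables are
  exactly \<open>S\<close>.
\<close>

section \<open>Flip invariance and juntas\<close>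

definition flip_invariant :: "nat \<Rightarrow> nat set \<Rightarrow> ((nat \<Rightarrow> bool) \<Rightarrow> bool) \<Rightarrow> bool" where
  "flip_invariant N J f \<longleftrightarrow> (\<forall>j\<in>J. \<forall>x\<in>inputs N. f (x(j := \<not> x j)) = f x)"

lemma is_junta_iff_flip_invariant:
  "is_junta N K f \<longleftrightarrow> (\<exists>J. J \<subseteq> {..<N} \<and> card J = N - K \<and> flip_invariant N J f)"
  by (simp add: is_junta_def flip_invariant_def)

lemma fun_upd_in_inputs: "x \<in> inputs N \<Longrightarrow> j < N \<Longrightarrow> x(j := b) \<in> inputs N"
  by (simp add: inputs_def)

lemma inputs_differ_below:
  "x \<in> inputs N \<Longrightarrow> x' \<in> inputs N \<Longrightarrow> x i \<noteq> x' i \<Longrightarrow> i < N"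
  unfolding inputs_def by (metis mem_Collect_eq not_less)

lemma flip_invariant_agree:
  assumes f: "flip_invariant N J f" and x: "x \<in> inputs N" and x': "x' \<in> inputs N"
    and agree: "\<forall>i. i \<notin> J \<longrightarrow> x i = x' i"
  shows "f x = f x'"
proof -
  have agree_if_finite_difference: "f z = f x'"
    if "finite D" "z \<in> inputs N" "{i. z i \<noteq> x' i} = D" "D \<subseteq> J" for z D
    using that
  proof (induction D arbitrary: z rule: finite_induct)
    case empty
    then show ?case by (simp add: fun_eq_iff)
  next
    case (insert d D)
    let ?z' = "z(d := \<not> z d)"
    have "d < N"
      using inputs_differ_below[OF insert.prems(1) x'] insert.prems(2) by blast
    then have "?z' \<in> inputs N"
      using insert.prems(1) by (simp add: fun_upd_in_inputs)
    moreover have "{i. ?z' i \<noteq> x' i} = D"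
      using insert.prems(2) insert.hyps(2) by (auto split: if_splits)
    ultimately have "f ?z' = f x'"
      using insert.IH insert.prems(3) by blast
    moreover have "f ?z' = f z"
      using f insert.prems(1,3) by (simp add: flip_invariant_def)
    ultimately show ?case by simp
  qed
  have "{i. x i \<noteq> x' i} \<subseteq> {..<N}"
    using inputs_differ_below[OF x x'] by blast
  then have "finite {i. x i \<noteq> x' i}"
    by (rule finite_subset) simp
  moreover have "{i. x i \<noteq> x' i} \<subseteq> J"
    using agree by blast
  ultimately show ?thesis
    using agree_if_finite_difference[OF _ x refl] by blast
qed

lemma is_junta_iff_factors:
  assumes "K \<le> N"
  shows "is_junta N K f \<longleftrightarrow> (\<exists>js\<in>tuples N K. \<exists>g. \<forall>x\<in>inputs N. f x = g (map x js))"
proof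
  assume "is_junta N K f"
  then obtain J where J: "J \<subseteq> {..<N}" "card J = N - K" and f: "flip_invariant N J f"
    unfolding is_junta_iff_flip_invariant by blast
  define js where "js = sorted_list_of_set ({..<N} - J)"
  have set_js: "set js = {..<N} - J"
    by (simp add: js_def)
  have "length js = K"
    using J assms by (simp add: js_def card_Diff_subset finite_subset)
  then have js: "js \<in> tuples N K"
    by (simp add: tuples_def set_js js_def)
  define g where "g y = f (SOME x'. x' \<in> inputs N \<and> map x' js = y)" for y
  have "f x = g (map x js)" if x: "x \<in> inputs N" for x
  proof -
    let ?x' = "SOME x'. x' \<in> inputs N \<and> map x' js = map x js"
    have x': "?x' \<in> inputs N" "map ?x' js = map x js"
      using someI_ex[of "\<lambda>x'. x' \<in> inputs N \<and> map x' js = map x js"] x by blast+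
    have "x i = ?x' i" if "i \<notin> J" for i
    proof (cases "i < N")
      case True
      then show ?thesis using x'(2) \<open>i \<notin> J\<close> set_js by auto
    next
      case False
      then show ?thesis using inputs_differ_below[OF x x'(1)] by blast
    qed
    then show ?thesis
      unfolding g_def using flip_invariant_agree[OF f x x'(1)] by blast
  qed
  then show "\<exists>js\<in>tuples N K. \<exists>g. \<forall>x\<in>inputs N. f x = g (map x js)"
    using js by blast
next
  assume "\<exists>js\<in>tuples N K. \<exists>g. \<forall>x\<in>inputs N. f x = g (map x js)"
  then obtain js g where js: "js \<in> tuples N K" and fg: "\<forall>x\<in>inputs N. f x = g (map x js)"
    by blast
  define J where "J = {..<N} - set js"
  have "J \<subseteq> {..<N}"
    by (simp add: J_def)
  moreover have "card J = N - K"
    using js unfolding tuples_def J_def by (simp add: card_Diff_subset distinct_card)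
  moreover have "flip_invariant N J f"
    unfolding flip_invariant_def
  proof (intro ballI)
    fix j x assume "j \<in> J" "x \<in> inputs N"
    then have "x(j := \<not> x j) \<in> inputs N"
      by (simp add: J_def fun_upd_in_inputs)
    moreover have "map (x(j := \<not> x j)) js = map x js"
      using \<open>j \<in> J\<close> by (simp add: J_def)
    ultimately show "f (x(j := \<not> x j)) = f x"
      using fg \<open>x \<in> inputs N\<close> by (simp del: map_eq_conv)
  qed
  ultimately show "is_junta N K f"
    unfolding is_junta_iff_flip_invariant by blast
qed

section \<open>Vertices of the polytope\<close>

definition cond_distr :: "nat \<Rightarrow> (bool \<Rightarrow> bool list \<Rightarrow> real) \<Rightarrow> bool" where
  "cond_distr K d \<longleftrightarrow> (\<forall>y. length y = K \<longrightarrow> (\<forall>a. 0 \<le> d a y) \<and> d False y + d True y = 1)"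

definition tuple_weights :: "nat \<Rightarrow> nat \<Rightarrow> (nat list \<Rightarrow> real) \<Rightarrow> bool" where
  "tuple_weights N K q \<longleftrightarrow> (\<forall>js\<in>tuples N K. 0 \<le> q js) \<and> (\<Sum>js\<in>tuples N K. q js) = 1"

definition mixture :: "nat \<Rightarrow> nat \<Rightarrow> (nat list \<Rightarrow> real) \<Rightarrow>
    (nat list \<Rightarrow> bool \<Rightarrow> bool list \<Rightarrow> real) \<Rightarrow> bool \<Rightarrow> (nat \<Rightarrow> bool) \<Rightarrow> real" where
  "mixture N K q D =
    (\<lambda>a x. if x \<in> inputs N then (\<Sum>js\<in>tuples N K. q js * D js a (map x js)) else 0)"

definition local_behavior ::
    "nat \<Rightarrow> nat list \<Rightarrow> (bool \<Rightarrow> bool list \<Rightarrow> real) \<Rightarrow> bool \<Rightarrow> (nat \<Rightarrow> bool) \<Rightarrow> real" where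
  "local_behavior N js d = (\<lambda>a x. if x \<in> inputs N then d a (map x js) else 0)"

lemma finite_tuples: "finite (tuples N K)"
proof (rule finite_subset)
  show "tuples N K \<subseteq> {js. set js \<subseteq> {..<N} \<and> length js = K}"
    by (auto simp: tuples_def)
qed (rule finite_lists_length_eq, simp)

lemma length_tuple: "js \<in> tuples N K \<Longrightarrow> length js = K"
  by (simp add: tuples_def)

lemma cond_distrD:
  assumes "cond_distr K d" "length y = K"
  shows "0 \<le> d a y" "d False y + d True y = 1"
  using assms by (auto simp: cond_distr_def)

lemma points_eqI:
  assumes "P \<in> points N" "Q \<in> points N" "\<And>a x. x \<in> inputs N \<Longrightarrow> P a x = Q a x"
  shows "P = Q"
proof (intro ext)
  fix a x
  show "P a x = Q a x"
    using assms by (cases "x \<in> inputs N") (auto simp: points_def)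
qed

lemma C_poly_subset_behaviors: "C_poly N K \<subseteq> behaviors N"
  by (auto simp: C_poly_def)

lemma behaviors_subset_points: "behaviors N \<subseteq> points N"
  by (auto simp: behaviors_def)

lemma behavior_bounds:
  assumes "P \<in> behaviors N" "x \<in> inputs N"
  shows "0 \<le> P a x" "P a x \<le> 1"
proof -
  have "0 \<le> P False x" "0 \<le> P True x" "P False x + P True x = 1"
    using assms by (auto simp: behaviors_def)
  then show "0 \<le> P a x" "P a x \<le> 1"
    by (cases a; simp)+
qed

lemma mixture_in_C_poly:
  assumes q: "tuple_weights N K q" and D: "\<forall>js\<in>tuples N K. cond_distr K (D js)"
  shows "mixture N K q D \<in> C_poly N K"
proof -
  have "mixture N K q D False x + mixture N K q D True x = 1" if "x \<in> inputs N" for x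
  proof -
    have "mixture N K q D False x + mixture N K q D True x
        = (\<Sum>js\<in>tuples N K. q js * (D js False (map x js) + D js True (map x js)))"
      using that by (simp add: mixture_def sum.distrib distrib_left)
    also have "\<dots> = (\<Sum>js\<in>tuples N K. q js)"
    proof (rule sum.cong[OF refl])
      fix js assume "js \<in> tuples N K"
      then show "q js * (D js False (map x js) + D js True (map x js)) = q js"
        using D cond_distrD(2)[of K "D js" "map x js"] by (simp add: length_tuple)
    qed
    finally show ?thesis
      using q by (simp add: tuple_weights_def)
  qed
  moreover have "0 \<le> mixture N K q D a x" for a x
    using q D
    by (auto simp: mixture_def tuple_weights_def cond_distrD length_tuple intro!: sum_nonneg)
  moreover have "mixture N K q D \<in> points N"
    by (simp add: points_def mixture_def)
  moreover have "\<forall>a. \<forall>x\<in>inputs N. mixture N K q D a x = (\<Sum>js\<in>tuples N K. q js * D js a (map x js))"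
    by (simp add: mixture_def)
  ultimately show ?thesis
    using q D unfolding C_poly_def behaviors_def tuple_weights_def cond_distr_def by blast
qed

lemma C_poly_iff_mixture:
  "P \<in> C_poly N K \<longleftrightarrow>
    (\<exists>q D. tuple_weights N K q \<and> (\<forall>js\<in>tuples N K. cond_distr K (D js)) \<and> P = mixture N K q D)"
proof
  assume P: "P \<in> C_poly N K"
  then obtain q D where q: "tuple_weights N K q" and D: "\<forall>js\<in>tuples N K. cond_distr K (D js)"
    and PqD: "\<forall>a. \<forall>x\<in>inputs N. P a x = (\<Sum>js\<in>tuples N K. q js * D js a (map x js))"
    unfolding C_poly_def tuple_weights_def cond_distr_def by blast
  have "P = mixture N K q D"
  proof (rule points_eqI)
    show "P \<in> points N"
      using P C_poly_subset_behaviors behaviors_subset_points by blast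
    show "mixture N K q D \<in> points N"
      by (simp add: points_def mixture_def)
  qed (use PqD in \<open>simp add: mixture_def\<close>)
  with q D show
    "\<exists>q D. tuple_weights N K q \<and> (\<forall>js\<in>tuples N K. cond_distr K (D js)) \<and> P = mixture N K q D"
    by blast
qed (auto intro: mixture_in_C_poly)

lemma local_behavior_in_C_poly:
  assumes js: "js \<in> tuples N K" and d: "cond_distr K d"
  shows "local_behavior N js d \<in> C_poly N K"
proof -
  let ?q = "\<lambda>js'. if js' = js then 1 else 0"
  have "tuple_weights N K ?q"
    using js by (simp add: tuple_weights_def finite_tuples)
  moreover have "local_behavior N js d = mixture N K ?q (\<lambda>_. d)"
  proof (intro ext)
    fix a x
    have "(\<Sum>js'\<in>tuples N K. ?q js' * d a (map x js'))
        = (\<Sum>js'\<in>tuples N K. if js' = js then d a (map x js) else 0)"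
      by (rule sum.cong) auto
    also have "\<dots> = d a (map x js)"
      using js by (simp add: finite_tuples)
    finally show "local_behavior N js d a x = mixture N K ?q (\<lambda>_. d) a x"
      by (simp add: local_behavior_def mixture_def)
  qed
  ultimately show ?thesis
    using d by (auto intro: mixture_in_C_poly)
qed

lemma vertex_ofD:
  assumes "vertex_of P S" "Q \<in> S" "R \<in> S" "0 < u" "u < 1"
    and "P = (\<lambda>a x. (1 - u) * Q a x + u * R a x)"
  shows "Q = R"
  using assms by (auto simp: vertex_of_def)

lemma convex_combination_01_eq:
  fixes s t u :: real
  assumes "0 \<le> s" "s \<le> 1" "0 \<le> t" "t \<le> 1" "0 < u" "u < 1"
    and "(1 - u) * s + u * t = 0 \<or> (1 - u) * s + u * t = 1"
  shows "s = t"
proof -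
  have nonneg: "0 \<le> (1 - u) * s" "0 \<le> u * t" "0 \<le> (1 - u) * (1 - s)" "0 \<le> u * (1 - t)"
    using assms by simp_all
  consider "(1 - u) * s + u * t = 0" | "(1 - u) * (1 - s) + u * (1 - t) = 0"
    using assms(7) by (auto simp: algebra_simps)
  then show ?thesis
  proof cases
    case 1
    then have "(1 - u) * s = 0" "u * t = 0"
      using nonneg by linarith+
    then show ?thesis
      using assms by simp
  next
    case 2
    then have "(1 - u) * (1 - s) = 0" "u * (1 - t) = 0"
      using nonneg by linarith+
    then show ?thesis
      using assms by simp
  qed
qed

lemma deterministic_vertex_of:
  assumes S: "S \<subseteq> behaviors N" and P: "P \<in> S"
    and det: "\<forall>a. \<forall>x\<in>inputs N. P a x = 0 \<or> P a x = 1"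
  shows "vertex_of P S"
  unfolding vertex_of_def
proof (intro conjI ballI allI impI)
  show "P \<in> S" by (rule P)
  fix Q R u assume Q: "Q \<in> S" and R: "R \<in> S" and u: "Q \<noteq> R \<and> 0 < u \<and> u < (1::real)"
  show "P \<noteq> (\<lambda>a x. (1 - u) * Q a x + u * R a x)"
  proof
    assume P_eq: "P = (\<lambda>a x. (1 - u) * Q a x + u * R a x)"
    have "Q = R"
    proof (rule points_eqI)
      show "Q \<in> points N" "R \<in> points N"
        using Q R S behaviors_subset_points by blast+
      fix a x assume x: "x \<in> inputs N"
      show "Q a x = R a x"
      proof (rule convex_combination_01_eq)
        show "0 \<le> Q a x" "Q a x \<le> 1" "0 \<le> R a x" "R a x \<le> 1"
          using Q R S x behavior_bounds by blast+
        show "(1 - u) * Q a x + u * R a x = 0 \<or> (1 - u) * Q a x + u * R a x = 1"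
          using det x P_eq by metis
      qed (use u in auto)
    qed
    with u show False
      by blast
  qed
qed

lemma vertex_local_behavior_deterministic:
  assumes v: "vertex_of (local_behavior N js d) (C_poly N K)"
    and js: "js \<in> tuples N K" and d: "cond_distr K d" and x: "x \<in> inputs N"
  shows "d True (map x js) = 0 \<or> d True (map x js) = 1"
proof (rule ccontr)
  define y0 where "y0 = map x js"
  define t where "t = d True y0"
  assume "\<not> (d True (map x js) = 0 \<or> d True (map x js) = 1)"
  moreover have "length y0 = K"
    using js by (simp add: y0_def length_tuple)
  then have "0 \<le> d True y0" "0 \<le> d False y0" and d_sum: "d False y0 + d True y0 = 1"
    using d by (simp_all add: cond_distrD)
  ultimately have t: "0 < t" "t < 1"
    by (auto simp: t_def y0_def)
  define sharpen where
    "sharpen b = (\<lambda>a y. if y = y0 then (if a = b then 1 else 0) else d a y)" for b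
  have sharpen_in: "local_behavior N js (sharpen b) \<in> C_poly N K" for b
  proof (rule local_behavior_in_C_poly[OF js])
    show "cond_distr K (sharpen b)"
      using d by (auto simp: cond_distr_def sharpen_def)
  qed
  have "local_behavior N js d =
      (\<lambda>a x. (1 - t) * local_behavior N js (sharpen False) a x
        + t * local_behavior N js (sharpen True) a x)"
    using d_sum by (auto simp: fun_eq_iff local_behavior_def sharpen_def t_def algebra_simps)
  then have "local_behavior N js (sharpen False) = local_behavior N js (sharpen True)"
    using vertex_ofD[OF v sharpen_in sharpen_in t] by blast
  then have "sharpen False True y0 = sharpen True True y0"
    using x by (metis local_behavior_def y0_def)
  then show False
    by (simp add: sharpen_def)
qed

lemma mixture_eq_local_if_weight_one:
  assumes q: "tuple_weights N K q" and js0: "js0 \<in> tuples N K" and one: "q js0 = 1"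
  shows "mixture N K q D = local_behavior N js0 (D js0)"
proof -
  have "(\<Sum>js\<in>tuples N K - {js0}. q js) = 0"
    using q js0 one by (simp add: tuple_weights_def sum_diff1 finite_tuples)
  then have "\<forall>js\<in>tuples N K - {js0}. q js = 0"
    using q by (subst (asm) sum_nonneg_eq_0_iff) (auto simp: finite_tuples tuple_weights_def)
  then have "(\<Sum>js\<in>tuples N K. q js * D js a (map x js)) = D js0 a (map x js0)" for a x
    using js0 one by (simp add: sum.remove[OF finite_tuples js0])
  then show ?thesis
    by (simp add: fun_eq_iff mixture_def local_behavior_def)
qed

lemma mixture_split_tuple:
  assumes js0: "js0 \<in> tuples N K" and q0: "q js0 \<noteq> 1"
  defines "q' \<equiv> \<lambda>js. if js = js0 then 0 else q js / (1 - q js0)"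
  shows "mixture N K q D =
    (\<lambda>a x. q js0 * local_behavior N js0 (D js0) a x + (1 - q js0) * mixture N K q' D a x)"
proof (intro ext)
  fix a x
  have "(1 - q js0) * (\<Sum>js\<in>tuples N K. q' js * D js a (map x js))
      = (1 - q js0) * (\<Sum>js\<in>tuples N K - {js0}. q' js * D js a (map x js))"
    by (simp add: sum.remove[OF finite_tuples js0] q'_def)
  also have "\<dots> = (\<Sum>js\<in>tuples N K - {js0}. q js * D js a (map x js))"
    unfolding sum_distrib_left using q0 by (intro sum.cong) (auto simp: q'_def)
  finally have "(1 - q js0) * (\<Sum>js\<in>tuples N K. q' js * D js a (map x js))
      = (\<Sum>js\<in>tuples N K - {js0}. q js * D js a (map x js))" .
  then show "mixture N K q D a x =
      q js0 * local_behavior N js0 (D js0) a x + (1 - q js0) * mixture N K q' D a x"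
    by (simp add: mixture_def local_behavior_def sum.remove[OF finite_tuples js0])
qed

lemma vertex_mixture_eq_local:
  assumes v: "vertex_of P (C_poly N K)" and q: "tuple_weights N K q"
    and D: "\<forall>js\<in>tuples N K. cond_distr K (D js)" and P: "P = mixture N K q D"
    and js0: "js0 \<in> tuples N K" and pos: "0 < q js0"
  shows "P = local_behavior N js0 (D js0)"
proof (cases "q js0 = 1")
  case True
  then show ?thesis
    using P mixture_eq_local_if_weight_one[OF q js0] by simp
next
  case False
  define q' where "q' = (\<lambda>js. if js = js0 then 0 else q js / (1 - q js0))"
  have "q js0 \<le> 1"
    using q js0 member_le_sum[OF js0, of q] finite_tuples by (auto simp: tuple_weights_def)
  with False have "q js0 < 1"
    by simp
  have "tuple_weights N K q'"
  proof -
    have "(\<Sum>js\<in>tuples N K. q' js) = (\<Sum>js\<in>tuples N K - {js0}. q' js)"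
      by (simp add: q'_def sum.remove[OF finite_tuples js0])
    also have "\<dots> = (\<Sum>js\<in>tuples N K - {js0}. q js) / (1 - q js0)"
      unfolding sum_divide_distrib by (intro sum.cong) (auto simp: q'_def)
    also have "\<dots> = 1"
      using q \<open>q js0 < 1\<close> by (simp add: tuple_weights_def sum_diff1 finite_tuples js0)
    finally show ?thesis
      using q \<open>q js0 < 1\<close> by (simp add: tuple_weights_def q'_def)
  qed
  then have mixture_in: "mixture N K q' D \<in> C_poly N K"
    using D by (rule mixture_in_C_poly)
  have local_in: "local_behavior N js0 (D js0) \<in> C_poly N K"
    using js0 D by (simp add: local_behavior_in_C_poly)
  have u: "0 < 1 - q js0" "1 - q js0 < 1"
    using pos \<open>q js0 < 1\<close> by simp_all
  have "P = (\<lambda>a x. (1 - (1 - q js0)) * local_behavior N js0 (D js0) a x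
      + (1 - q js0) * mixture N K q' D a x)"
    using P mixture_split_tuple[of js0 N K q, OF js0 False] by (simp add: q'_def)
  then have "local_behavior N js0 (D js0) = mixture N K q' D"
    by (rule vertex_ofD[OF v local_in mixture_in u])
  then show ?thesis
    using P mixture_split_tuple[of js0 N K q, OF js0 False]
    by (simp add: q'_def fun_eq_iff algebra_simps)
qed

lemma vertex_eq_local_behavior:
  assumes v: "vertex_of P (C_poly N K)"
  obtains js d where "js \<in> tuples N K" "cond_distr K d" "P = local_behavior N js d"
proof -
  have "P \<in> C_poly N K"
    using v by (simp add: vertex_of_def)
  then obtain q D where q: "tuple_weights N K q" and D: "\<forall>js\<in>tuples N K. cond_distr K (D js)"
    and P: "P = mixture N K q D"
    unfolding C_poly_iff_mixture by blast
  have "\<exists>js\<in>tuples N K. 0 < q js"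
  proof (rule ccontr)
    assume "\<not> (\<exists>js\<in>tuples N K. 0 < q js)"
    then have "(\<Sum>js\<in>tuples N K. q js) \<le> 0"
      by (intro sum_nonpos) (simp add: not_less)
    then show False
      using q by (simp add: tuple_weights_def)
  qed
  then obtain js where js: "js \<in> tuples N K" "0 < q js"
    by blast
  show ?thesis
  proof (rule that)
    show "js \<in> tuples N K" "cond_distr K (D js)"
      using js D by simp_all
    show "P = local_behavior N js (D js)"
      by (rule vertex_mixture_eq_local[OF v q D P js])
  qed
qed

lemma vertex_imp_junta_behavior:
  assumes "K \<le> N" and v: "vertex_of P (C_poly N K)"
  obtains f where "f \<in> juntas N K" "P = det_behavior N f"
proof -
  obtain js d where js: "js \<in> tuples N K" and d: "cond_distr K d" and P: "P = local_behavior N js d"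
    using vertex_eq_local_behavior[OF v] .
  define f where "f x = (x \<in> inputs N \<and> d True (map x js) = 1)" for x
  have "is_junta N K f"
    unfolding is_junta_iff_factors[OF assms(1)]
  proof (intro bexI exI)
    show "\<forall>x\<in>inputs N. f x = (\<lambda>y. d True y = 1) (map x js)"
      by (simp add: f_def)
  qed (rule js)
  then have "f \<in> juntas N K"
    by (simp add: juntas_def f_def)
  moreover have "P = det_behavior N f"
  proof (intro ext)
    fix a x
    show "P a x = det_behavior N f a x"
    proof (cases "x \<in> inputs N")
      case True
      have "d True (map x js) = 0 \<or> d True (map x js) = 1"
        using v unfolding P by (rule vertex_local_behavior_deterministic[OF _ js d True])
      moreover have "d False (map x js) + d True (map x js) = 1"
        using d js by (simp add: cond_distrD length_tuple)
      ultimately show ?thesis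
        using True by (cases a) (auto simp: P local_behavior_def det_behavior_def f_def)
    qed (simp add: P local_behavior_def det_behavior_def)
  qed
  ultimately show ?thesis
    by (rule that)
qed

lemma junta_behavior_is_vertex:
  assumes "K \<le> N" and "is_junta N K f"
  shows "vertex_of (det_behavior N f) (C_poly N K)"
proof -
  obtain js g where js: "js \<in> tuples N K" and fg: "\<forall>x\<in>inputs N. f x = g (map x js)"
    using assms unfolding is_junta_iff_factors[OF assms(1)] by blast
  define d where "d a y = (if a = g y then 1 else 0 :: real)" for a y
  have "cond_distr K d"
    by (simp add: cond_distr_def d_def)
  moreover have "det_behavior N f = local_behavior N js d"
    using fg by (simp add: fun_eq_iff det_behavior_def local_behavior_def d_def)
  ultimately have "det_behavior N f \<in> C_poly N K"
    using js by (simp add: local_behavior_in_C_poly)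
  then show ?thesis
    by (rule deterministic_vertex_of[OF C_poly_subset_behaviors]) (simp add: det_behavior_def)
qed

lemma inj_on_det_behavior: "inj_on (det_behavior N) (juntas N K)"
proof (rule inj_onI)
  fix f g assume f: "f \<in> juntas N K" and g: "g \<in> juntas N K"
    and eq: "det_behavior N f = det_behavior N g"
  show "f = g"
  proof
    fix x
    show "f x = g x"
    proof (cases "x \<in> inputs N")
      case True
      then show ?thesis
        using fun_cong[OF fun_cong[OF eq, of True], of x]
        by (simp add: det_behavior_def split: if_splits)
    next
      case False
      then show ?thesis
        using f g by (simp add: juntas_def)
    qed
  qed
qed

lemma vertices_C_poly:
  assumes "K \<le> N"
  shows "{P. vertex_of P (C_poly N K)} = det_behavior N ` juntas N K"
proof
  show "{P. vertex_of P (C_poly N K)} \<subseteq> det_behavior N ` juntas N K"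
    using vertex_imp_junta_behavior[OF assms] by blast
  show "det_behavior N ` juntas N K \<subseteq> {P. vertex_of P (C_poly N K)}"
    using junta_behavior_is_vertex[OF assms] by (auto simp: juntas_def)
qed

lemma vertex_iff_deterministic_junta:
  assumes "K \<le> N" and P: "P \<in> points N"
  shows "vertex_of P (C_poly N K) \<longleftrightarrow>
    (\<exists>f. is_junta N K f \<and> (\<forall>a. \<forall>x\<in>inputs N. P a x = (if a = f x then 1 else 0)))"
proof
  assume "vertex_of P (C_poly N K)"
  then obtain f where "f \<in> juntas N K" "P = det_behavior N f"
    using vertex_imp_junta_behavior[OF assms(1)] by blast
  then show "\<exists>f. is_junta N K f \<and> (\<forall>a. \<forall>x\<in>inputs N. P a x = (if a = f x then 1 else 0))"
    by (auto simp: juntas_def det_behavior_def)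
next
  assume "\<exists>f. is_junta N K f \<and> (\<forall>a. \<forall>x\<in>inputs N. P a x = (if a = f x then 1 else 0))"
  then obtain f where f: "is_junta N K f"
    and Pf: "\<forall>a. \<forall>x\<in>inputs N. P a x = (if a = f x then 1 else 0)"
    by blast
  have "P = det_behavior N f"
    by (rule points_eqI[OF P]) (simp_all add: points_def det_behavior_def Pf)
  then show "vertex_of P (C_poly N K)"
    using junta_behavior_is_vertex[OF assms(1) f] by simp
qed

section \<open>Counting juntas\<close>

definition relevant_vars :: "nat \<Rightarrow> ((nat \<Rightarrow> bool) \<Rightarrow> bool) \<Rightarrow> nat set" where
  "relevant_vars N f = {j. j < N \<and> \<not> flip_invariant N {j} f}"

definition juntas_on :: "nat \<Rightarrow> nat set \<Rightarrow> ((nat \<Rightarrow> bool) \<Rightarrow> bool) set" where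
  "juntas_on N S = {f. (\<forall>x. x \<notin> inputs N \<longrightarrow> \<not> f x) \<and> relevant_vars N f \<subseteq> S}"

definition exact_juntas_on :: "nat \<Rightarrow> nat set \<Rightarrow> ((nat \<Rightarrow> bool) \<Rightarrow> bool) set" where
  "exact_juntas_on N S = {f. (\<forall>x. x \<notin> inputs N \<longrightarrow> \<not> f x) \<and> relevant_vars N f = S}"

lemma relevant_vars_subset: "relevant_vars N f \<subseteq> {..<N}"
  by (auto simp: relevant_vars_def)

lemma flip_invariant_iff_disjoint:
  "J \<subseteq> {..<N} \<Longrightarrow> flip_invariant N J f \<longleftrightarrow> J \<inter> relevant_vars N f = {}"
  by (auto simp: relevant_vars_def flip_invariant_def)

lemma is_junta_iff_card_relevant_vars:
  assumes "K \<le> N"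
  shows "is_junta N K f \<longleftrightarrow> card (relevant_vars N f) \<le> K"
proof
  assume "is_junta N K f"
  then obtain J where J: "J \<subseteq> {..<N}" "card J = N - K" "flip_invariant N J f"
    unfolding is_junta_iff_flip_invariant by blast
  then have "relevant_vars N f \<subseteq> {..<N} - J"
    using flip_invariant_iff_disjoint relevant_vars_subset by blast
  then have "card (relevant_vars N f) \<le> card ({..<N} - J)"
    by (rule card_mono[rotated]) simp
  also have "\<dots> = K"
    using J assms by (simp add: card_Diff_subset finite_subset)
  finally show "card (relevant_vars N f) \<le> K" .
next
  assume "card (relevant_vars N f) \<le> K"
  moreover have "card ({..<N} - relevant_vars N f) = N - card (relevant_vars N f)"
    using relevant_vars_subset[of N f] finite_subset[OF relevant_vars_subset[of N f]]
    by (simp add: card_Diff_subset)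
  ultimately have "N - K \<le> card ({..<N} - relevant_vars N f)"
    by linarith
  then obtain J where J: "J \<subseteq> {..<N} - relevant_vars N f" "card J = N - K"
    by (rule obtain_subset_with_card_n)
  then have "flip_invariant N J f"
    using flip_invariant_iff_disjoint[of J N f] by blast
  with J show "is_junta N K f"
    unfolding is_junta_iff_flip_invariant by blast
qed

lemma characteristic_in_inputs: "A \<subseteq> {..<N} \<Longrightarrow> (\<lambda>i. i \<in> A) \<in> inputs N"
  by (force simp: inputs_def)

lemma relevant_vars_restrict:
  assumes "relevant_vars N f \<subseteq> S" and x: "x \<in> inputs N"
  shows "f (\<lambda>i. i \<in> S \<and> x i) = f x"
proof -
  have "flip_invariant N ({..<N} - S) f"
    using assms(1) flip_invariant_iff_disjoint[of "{..<N} - S" N f] by blast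
  then show ?thesis
    by (rule flip_invariant_agree) (use x in \<open>auto simp: inputs_def\<close>)
qed

lemma extension_in_juntas_on: "(\<lambda>x. x \<in> inputs N \<and> g {i \<in> S. x i}) \<in> juntas_on N S"
proof -
  have "flip_invariant N {j} (\<lambda>x. x \<in> inputs N \<and> g {i \<in> S. x i})" if "j < N" "j \<notin> S" for j
  proof -
    have "{i \<in> S. (x(j := b)) i} = {i \<in> S. x i}" for x b
      using \<open>j \<notin> S\<close> by auto
    then show ?thesis
      using \<open>j < N\<close> by (simp add: flip_invariant_def fun_upd_in_inputs)
  qed
  then show ?thesis
    by (auto simp: juntas_on_def relevant_vars_def)
qed

lemma bij_betw_truth_table:
  assumes S: "S \<subseteq> {..<N}"
  shows "bij_betw (\<lambda>f. \<lambda>A\<in>Pow S. f (\<lambda>i. i \<in> A)) (juntas_on N S) (Pow S \<rightarrow>\<^sub>E (UNIV :: bool set))"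
proof (rule bij_betwI[where g = "\<lambda>g x. x \<in> inputs N \<and> g {i \<in> S. x i}"])
  show "(\<lambda>f. \<lambda>A\<in>Pow S. f (\<lambda>i. i \<in> A)) \<in> juntas_on N S \<rightarrow> Pow S \<rightarrow>\<^sub>E UNIV"
    by simp
  show "(\<lambda>g x. x \<in> inputs N \<and> g {i \<in> S. x i}) \<in> (Pow S \<rightarrow>\<^sub>E UNIV) \<rightarrow> juntas_on N S"
    using extension_in_juntas_on by blast
  show "(\<lambda>x. x \<in> inputs N \<and> (\<lambda>A\<in>Pow S. f (\<lambda>i. i \<in> A)) {i \<in> S. x i}) = f"
    if f: "f \<in> juntas_on N S" for f
  proof
    fix x
    show "(x \<in> inputs N \<and> (\<lambda>A\<in>Pow S. f (\<lambda>i. i \<in> A)) {i \<in> S. x i}) = f x"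
    proof (cases "x \<in> inputs N")
      case True
      then show ?thesis
        using f relevant_vars_restrict[of N f S x] by (simp add: juntas_on_def)
    qed (use f in \<open>simp add: juntas_on_def\<close>)
  qed
  show "(\<lambda>A\<in>Pow S. (\<lambda>x. x \<in> inputs N \<and> g {i \<in> S. x i}) (\<lambda>i. i \<in> A)) = g"
    if g: "g \<in> Pow S \<rightarrow>\<^sub>E UNIV" for g
  proof
    fix A
    show "(\<lambda>A\<in>Pow S. (\<lambda>x. x \<in> inputs N \<and> g {i \<in> S. x i}) (\<lambda>i. i \<in> A)) A = g A"
    proof (cases "A \<subseteq> S")
      case True
      then have "(\<lambda>A\<in>Pow S. (\<lambda>x. x \<in> inputs N \<and> g {i \<in> S. x i}) (\<lambda>i. i \<in> A)) A
          = g {i \<in> S. i \<in> A}"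
        using S characteristic_in_inputs[of A N] by simp
      also have "{i \<in> S. i \<in> A} = A"
        using True by blast
      finally show ?thesis .
    qed (use PiE_arb[OF g] in simp)
  qed
qed

lemma card_juntas_on:
  assumes S: "S \<subseteq> {..<N}"
  shows "finite (juntas_on N S)" "card (juntas_on N S) = 2 ^ 2 ^ card S"
proof -
  have "finite S"
    using S finite_subset by blast
  then have "finite (Pow S \<rightarrow>\<^sub>E (UNIV :: bool set))"
    and "card (Pow S \<rightarrow>\<^sub>E (UNIV :: bool set)) = 2 ^ 2 ^ card S"
    by (simp_all add: finite_PiE card_PiE card_Pow)
  with bij_betw_truth_table[OF S]
  show "finite (juntas_on N S)" "card (juntas_on N S) = 2 ^ 2 ^ card S"
    by (simp_all add: bij_betw_finite bij_betw_same_card)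
qed

lemma finite_exact_juntas_on: "finite (exact_juntas_on N S)"
proof (rule finite_subset)
  show "exact_juntas_on N S \<subseteq> juntas_on N {..<N}"
    using relevant_vars_subset by (auto simp: exact_juntas_on_def juntas_on_def)
qed (simp add: card_juntas_on)

lemma exact_juntas_on_disjoint: "S \<noteq> T \<Longrightarrow> exact_juntas_on N S \<inter> exact_juntas_on N T = {}"
  by (auto simp: exact_juntas_on_def)

lemma juntas_on_eq_UN_exact: "juntas_on N S = (\<Union>T\<in>Pow S. exact_juntas_on N T)"
  by (auto simp: juntas_on_def exact_juntas_on_def)

lemma sum_subsets_by_card:
  fixes h :: "nat \<Rightarrow> 'a::comm_semiring_1"
  assumes "finite S"
  shows "(\<Sum>T | T \<subseteq> S \<and> card T \<le> m. h (card T)) = (\<Sum>k=0..m. of_nat (card S choose k) * h k)"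
proof -
  have "(\<Sum>T | T \<subseteq> S \<and> card T \<le> m. h (card T))
      = (\<Sum>k=0..m. \<Sum>T | T \<in> {T. T \<subseteq> S \<and> card T \<le> m} \<and> card T = k. h (card T))"
    by (rule sum.group[symmetric]) (use assms in auto)
  also have "\<dots> = (\<Sum>k=0..m. of_nat (card S choose k) * h k)"
  proof (rule sum.cong[OF refl])
    fix k assume "k \<in> {0..m}"
    then have "{T. T \<in> {T. T \<subseteq> S \<and> card T \<le> m} \<and> card T = k} = {T. T \<subseteq> S \<and> card T = k}"
      by auto
    then have "(\<Sum>T | T \<in> {T. T \<subseteq> S \<and> card T \<le> m} \<and> card T = k. h (card T))
        = (\<Sum>T | T \<subseteq> S \<and> card T = k. h k)"
      by (auto intro: sum.cong)
    also have "\<dots> = of_nat (card S choose k) * h k"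
      by (simp add: n_subsets assms)
    finally show "(\<Sum>T | T \<in> {T. T \<subseteq> S \<and> card T \<le> m} \<and> card T = k. h (card T))
        = of_nat (card S choose k) * h k" .
  qed
  finally show ?thesis .
qed

lemma card_exact_juntas_on:
  assumes S: "S \<subseteq> {..<N}"
  shows "int (card (exact_juntas_on N S)) =
    (\<Sum>r=0..card S. (-1) ^ (card S - r) * int (card S choose r) * 2 ^ 2 ^ r)"
proof -
  have "finite S"
    using S finite_subset by blast
  have "int (card (juntas_on N T)) = (\<Sum>U\<in>Pow T. int (card (exact_juntas_on N U)))"
    if "finite T" for T
  proof -
    have "card (juntas_on N T) = (\<Sum>U\<in>Pow T. card (exact_juntas_on N U))"
      unfolding juntas_on_eq_UN_exact
      by (rule card_UN_disjoint) (auto simp: that finite_exact_juntas_on exact_juntas_on_disjoint)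
    then show ?thesis
      by simp
  qed
  then have "int (card (exact_juntas_on N S)) =
      (\<Sum>T\<in>Pow S. (-1) ^ (card S - card T) * int (card (juntas_on N T)))"
    by (rule inclusion_exclusion_mobius) (simp_all add: \<open>finite S\<close>)
  also have "\<dots> = (\<Sum>T | T \<subseteq> S \<and> card T \<le> card S. (-1) ^ (card S - card T) * 2 ^ 2 ^ card T)"
  proof (rule sum.cong)
    show "Pow S = {T. T \<subseteq> S \<and> card T \<le> card S}"
      using \<open>finite S\<close> by (auto intro: card_mono)
  next
    fix T assume "T \<in> {T. T \<subseteq> S \<and> card T \<le> card S}"
    then have "T \<subseteq> {..<N}"
      using S by blast
    then show "(-1) ^ (card S - card T) * int (card (juntas_on N T))
        = (-1) ^ (card S - card T) * 2 ^ 2 ^ card T"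
      by (simp add: card_juntas_on)
  qed
  also have "\<dots> = (\<Sum>r=0..card S. int (card S choose r) * ((-1) ^ (card S - r) * 2 ^ 2 ^ r))"
    by (rule sum_subsets_by_card) (rule \<open>finite S\<close>)
  finally show ?thesis
    by (simp add: mult.assoc mult.left_commute)
qed

lemma juntas_eq_UN_exact:
  assumes "K \<le> N"
  shows "juntas N K = (\<Union>S\<in>{S. S \<subseteq> {..<N} \<and> card S \<le> K}. exact_juntas_on N S)"
  using is_junta_iff_card_relevant_vars[OF assms] relevant_vars_subset
  by (auto simp: juntas_def exact_juntas_on_def)

lemma card_juntas:
  assumes "K \<le> N"
  shows "int (card (juntas N K)) =
    (\<Sum>k=0..K. int (N choose k) * (\<Sum>r=0..k. (-1) ^ (k - r) * int (k choose r) * 2 ^ 2 ^ r))"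
proof -
  have "int (card (juntas N K)) = (\<Sum>S | S \<subseteq> {..<N} \<and> card S \<le> K. int (card (exact_juntas_on N S)))"
    unfolding juntas_eq_UN_exact[OF assms]
    by (subst card_UN_disjoint) (auto simp: finite_exact_juntas_on exact_juntas_on_disjoint)
  also have "\<dots> = (\<Sum>S | S \<subseteq> {..<N} \<and> card S \<le> K.
      \<Sum>r=0..card S. (-1) ^ (card S - r) * int (card S choose r) * 2 ^ 2 ^ r)"
    by (rule sum.cong) (simp_all add: card_exact_juntas_on)
  also have "\<dots> = (\<Sum>k=0..K. int (N choose k) *
      (\<Sum>r=0..k. (-1) ^ (k - r) * int (k choose r) * 2 ^ 2 ^ r))"
    by (subst sum_subsets_by_card) simp_all
  finally show ?thesis .
qed

theorem mainTheorem1: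
  fixes N K :: nat
  assumes "1 \<le> N" and "1 \<le> K" and "K \<le> N"
  shows "(\<forall>P\<in>behaviors N. vertex_of P (C_poly N K) \<longleftrightarrow>
            (\<exists>f. is_junta N K f \<and>
               (\<forall>a. \<forall>x\<in>inputs N. P a x = (if a = f x then 1 else 0))))
       \<and> bij_betw (det_behavior N) (juntas N K) {P. vertex_of P (C_poly N K)}
       \<and> int (card {P. vertex_of P (C_poly N K)}) =
           (\<Sum>k=0..K. int (N choose k) *
              (\<Sum>r=0..k. (-1) ^ (k - r) * int (k choose r) * 2 ^ (2 ^ r)))"
proof (intro conjI ballI)
  show "vertex_of P (C_poly N K) \<longleftrightarrow>
      (\<exists>f. is_junta N K f \<and> (\<forall>a. \<forall>x\<in>inputs N. P a x = (if a = f x then 1 else 0)))"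
    if "P \<in> behaviors N" for P
    using that behaviors_subset_points vertex_iff_deterministic_junta[OF assms(3)] by blast
  show bij: "bij_betw (det_behavior N) (juntas N K) {P. vertex_of P (C_poly N K)}"
    unfolding vertices_C_poly[OF assms(3)] by (rule inj_on_imp_bij_betw[OF inj_on_det_behavior])
  show "int (card {P. vertex_of P (C_poly N K)}) =
      (\<Sum>k=0..K. int (N choose k) * (\<Sum>r=0..k. (-1) ^ (k - r) * int (k choose r) * 2 ^ (2 ^ r)))"
    using bij_betw_same_card[OF bij] card_juntas[OF assms(3)] by simp
qed

end
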